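(* Let $\ell\le d\le n/2$ and suppose $d$ is known in advance to the algorithm. Any non-adaptive randomized group testing algorithm that, for every defective set $I\subseteq[n]$ of size $d$, with probability at least $2/3$ detects $\ell$ defective items must make at least $\ell\log(n/d)-1$ tests.
   Context: Group testing: items $X=[n]$, unknown defective set $I\subseteq X$ with $d=|I|$. A test $Q\subseteq X$ has answer $1$ if $Q\cap I\neq\emptyset$ and $0$ otherwise. A non-adaptive (randomized) algorithm chooses all its tests before seeing any answer, then computes its output from the answers. "Detects $\ell$ defective items" means it outputs $L\subseteq I$ with $|L|=\ell$. "$d$ is known in advance" means the algorithm is given an integer $D$ with $d/4\le D\le 4d$ (in particular, the bound applies when $d$ is given exactly). Logarithms are base 2. *)

theory Defs
  imports "HOL-Probability.Probability"
begin

definition test_answer :: "nat set \<Rightarrow> nat set \<Rightarrow> bool" where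
  "test_answer I Q \<longleftrightarrow> Q \<inter> I \<noteq> {}"

text \<open>A deterministic non-adaptive algorithm: a list of tests, chosen in advance,
  and a decoder mapping the vector of answers to an output set.\<close>
type_synonym na_alg = "nat set list \<times> (bool list \<Rightarrow> nat set)"

definition run_alg :: "na_alg \<Rightarrow> nat set \<Rightarrow> nat set" where
  "run_alg A I = snd A (map (test_answer I) (fst A))"

definition detects :: "nat \<Rightarrow> nat set \<Rightarrow> nat set \<Rightarrow> bool" where
  "detects l I L \<longleftrightarrow> L \<subseteq> I \<and> card L = l"

text \<open>A randomized non-adaptive algorithm is a probability distribution over
  deterministic non-adaptive algorithms (the random seed is drawn first, then all
  tests are fixed before any answer is seen).\<close>

end

theory Submission
  imports Defs
begin

(* A deterministic algorithm with at most m tests sees at most 2^m answer vectors, so it has at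
   most 2^m possible outputs; an output L of size l is correct only for the C(n-l, d-l) defective
   sets containing L. Hence it succeeds on at most 2^m C(n-l, d-l) of the C(n, d) defective sets.
   Averaging over the random seed, success probability 2/3 on every defective set forces
   (2/3) C(n, d) <= 2^m C(n-l, d-l), and C(n, d) / C(n-l, d-l) >= (n/d)^l gives (n/d)^l <= 2^(m+1). *)

lemma sum_prob_le_multiplicity_bound:
  fixes R :: "'a pmf" and G :: "'b \<Rightarrow> 'a set" and K :: nat
  assumes "finite S"
    and "\<And>A. A \<in> set_pmf R \<Longrightarrow> card {I\<in>S. A \<in> G I} \<le> K"
  shows "(\<Sum>I\<in>S. measure_pmf.prob R (G I)) \<le> K"
proof -
  \<comment> \<open>The sum of the probabilities is the expected number of events that occur.\<close>
  have count_eq: "(\<Sum>I\<in>S. indicator (G I) A) = real (card {I\<in>S. A \<in> G I})" for A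
    using assms(1) by (simp add: indicator_def sum.If_cases Int_def)
  have "(\<Sum>I\<in>S. measure_pmf.prob R (G I))
      = measure_pmf.expectation R (\<lambda>A. \<Sum>I\<in>S. indicator (G I) A)"
    by (simp add: Bochner_Integration.integral_sum measure_pmf.emeasure_eq_measure)
  also have "\<dots> \<le> measure_pmf.expectation R (\<lambda>_. K)"
    by (intro integral_mono_AE Bochner_Integration.integrable_sum integrable_real_indicator)
       (auto simp: AE_measure_pmf_iff assms(2) count_eq measure_pmf.emeasure_eq_measure)
  finally show ?thesis by simp
qed

lemma card_supersets_le:
  assumes "finite X"
  shows "card {I. I \<subseteq> X \<and> card I = d \<and> L \<subseteq> I} \<le> (card X - card L) choose (d - card L)"
proof (cases "L \<subseteq> X")
  case False
  then have "{I. I \<subseteq> X \<and> card I = d \<and> L \<subseteq> I} = {}" by auto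
  then show ?thesis by (metis card.empty le0)
next
  case True
  let ?U = "{I. I \<subseteq> X \<and> card I = d \<and> L \<subseteq> I}"
  let ?B = "{B. B \<subseteq> X - L \<and> card B = d - card L}"
  have "finite L" using True assms finite_subset by blast
  have "card ?U \<le> card ?B"
  proof (rule card_inj_on_le)
    show "inj_on (\<lambda>I. I - L) ?U"
      by (rule inj_onI) blast
    show "(\<lambda>I. I - L) ` ?U \<subseteq> ?B"
      using \<open>finite L\<close> by (auto simp: card_Diff_subset)
    show "finite ?B"
      using assms by simp
  qed
  also have "\<dots> = (card X - card L) choose (d - card L)"
    using assms True \<open>finite L\<close> by (simp add: n_subsets card_Diff_subset)
  finally show ?thesis .
qed

lemma card_run_alg_image_le: "card (run_alg A ` U) \<le> 2 ^ length (fst A)"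
proof -
  let ?V = "{v :: bool list. length v = length (fst A)}"
  have "finite ?V"
    using finite_lists_length_eq[of "UNIV :: bool set"] by simp
  have "run_alg A ` U \<subseteq> snd A ` ?V"
    by (auto simp: run_alg_def)
  then have "card (run_alg A ` U) \<le> card (snd A ` ?V)"
    using \<open>finite ?V\<close> by (intro card_mono) auto
  also have "\<dots> \<le> card ?V"
    using \<open>finite ?V\<close> by (rule card_image_le)
  also have "\<dots> = 2 ^ length (fst A)"
    using card_lists_length_eq[of "UNIV :: bool set"] by simp
  finally show ?thesis .
qed

lemma card_detected_le:
  assumes "finite X"
  shows "card {I. I \<subseteq> X \<and> card I = d \<and> detects l I (f I)}
           \<le> card (f ` {I. I \<subseteq> X \<and> card I = d}) * ((card X - l) choose (d - l))"
proof -
  let ?S = "{I. I \<subseteq> X \<and> card I = d}"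
  let ?T = "\<lambda>L. {I. I \<subseteq> X \<and> card I = d \<and> L \<subseteq> I \<and> card L = l}"
  have finite_T: "finite (?T L)" for L
    using assms(1) by (auto intro: finite_subset[of _ "Pow X"])
  have card_T: "card (?T L) \<le> (card X - l) choose (d - l)" for L
    using card_supersets_le[OF assms(1), of d L] by (cases "card L = l") simp_all
  have "{I. I \<subseteq> X \<and> card I = d \<and> detects l I (f I)} \<subseteq> (\<Union>L\<in>f ` ?S. ?T L)"
    by (auto simp: detects_def)
  then have "card {I. I \<subseteq> X \<and> card I = d \<and> detects l I (f I)}
      \<le> card (\<Union>L\<in>f ` ?S. ?T L)"
    using assms(1) finite_T by (intro card_mono) auto
  also have "\<dots> \<le> (\<Sum>L\<in>f ` ?S. card (?T L))"
    by (rule card_UN_le) (use assms(1) in simp)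
  also have "\<dots> \<le> card (f ` ?S) * ((card X - l) choose (d - l))"
    using sum_bounded_above[of "f ` ?S" "\<lambda>L. card (?T L)", OF card_T] by simp
  finally show ?thesis .
qed

lemma card_detected_by_run_alg_le:
  assumes "finite X" and "length (fst A) \<le> m"
  shows "card {I. I \<subseteq> X \<and> card I = d \<and> detects l I (run_alg A I)}
           \<le> 2 ^ m * ((card X - l) choose (d - l))"
proof -
  have "card {I. I \<subseteq> X \<and> card I = d \<and> detects l I (run_alg A I)}
      \<le> card (run_alg A ` {I. I \<subseteq> X \<and> card I = d}) * ((card X - l) choose (d - l))"
    using assms(1) by (rule card_detected_le)
  also have "\<dots> \<le> 2 ^ m * ((card X - l) choose (d - l))"
    using assms(2)
    by (intro mult_right_mono order.trans[OF card_run_alg_image_le power_increasing]) auto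
  finally show ?thesis .
qed

lemma pow_div_mult_choose_diff_le_choose:
  "l \<le> d \<Longrightarrow> d \<le> n \<Longrightarrow>
     (real n / real d) ^ l * real ((n - l) choose (d - l)) \<le> real (n choose d)"
proof (induction l arbitrary: n d)
  case 0
  then show ?case by simp
next
  case (Suc l)
  obtain d' where d': "d = Suc d'" using Suc.prems by (cases d) auto
  obtain n' where n': "n = Suc n'" using Suc.prems d' by (cases n) auto
  have IH: "(real n' / real d') ^ l * real ((n' - l) choose (d' - l)) \<le> real (n' choose d')"
    using Suc.IH[of d' n'] Suc.prems d' n' by simp
  have ratio_mono: "(real n / real d) ^ l \<le> (real n' / real d') ^ l"
  proof (cases l)
    case (Suc k)
    then have "1 \<le> d'" "d' \<le> n'" using Suc.prems d' n' by simp_all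
    then have "real n / real d \<le> real n' / real d'"
      using d' n' by (simp add: field_simps)
    then show ?thesis by (intro power_mono) auto
  qed simp
  have "(real n / real d) ^ Suc l * real ((n - Suc l) choose (d - Suc l))
      = (real n / real d) * ((real n / real d) ^ l * real ((n' - l) choose (d' - l)))"
    using d' n' by simp
  also have "\<dots> \<le> (real n / real d) * ((real n' / real d') ^ l * real ((n' - l) choose (d' - l)))"
    by (intro mult_left_mono mult_right_mono ratio_mono) auto
  also have "\<dots> \<le> (real n / real d) * real (n' choose d')"
    by (intro mult_left_mono IH) auto
  also have "\<dots> = real (n choose d)"
    using binomial_absorption[of d' n] d' n' by (simp add: field_simps flip: of_nat_mult)
  finally show ?case .
qed

lemma mult_log_le_of_power_le:
  fixes b q :: real
  assumes "1 < b" and "0 < q" and "q ^ l \<le> b ^ k"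
  shows "real l * log b q \<le> real k"
proof -
  have "real l * log b q = log b (q ^ l)"
    using assms(2) by (simp add: log_nat_power)
  also have "\<dots> \<le> log b (b ^ k)"
    using assms by (subst log_le_cancel_iff) auto
  also have "\<dots> = real k"
    using assms(1) by (simp add: log_nat_power)
  finally show ?thesis .
qed

theorem theorem12:
  fixes n d l m :: nat and R :: "na_alg pmf"
  assumes "l \<le> d" and "2 * d \<le> n"
    and tests_in_X: "\<forall>A \<in> set_pmf R. \<forall>Q \<in> set (fst A). Q \<subseteq> {1..n}"
    and num_tests: "\<forall>A \<in> set_pmf R. length (fst A) \<le> m"
    and success: "\<forall>I. I \<subseteq> {1..n} \<and> card I = d \<longrightarrow>
                    measure_pmf.prob R {A. detects l I (run_alg A I)} \<ge> 2/3"
  shows "real m \<ge> real l * log 2 (real n / real d) - 1"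
proof (cases "l = 0")
  case False
  then have "0 < d" "d \<le> n" using assms(1,2) by simp_all
  define S where "S = {I. I \<subseteq> {1..n} \<and> card I = d}"
  define C where "C = (n - l) choose (d - l)"
  have successes_le: "card {I\<in>S. A \<in> {A. detects l I (run_alg A I)}} \<le> 2 ^ m * C"
    if "A \<in> set_pmf R" for A
    using card_detected_by_run_alg_le[of "{1..n}" A m d l] num_tests that
    by (simp add: S_def C_def)
  have "(real n / real d) ^ l * C * (2/3) \<le> real (n choose d) * (2/3)"
    using pow_div_mult_choose_diff_le_choose[OF assms(1) \<open>d \<le> n\<close>] by (simp add: C_def)
  also have "\<dots> = (\<Sum>I\<in>S. 2/3)"
    using n_subsets[of "{1..n}" d] by (simp add: S_def)
  also have "\<dots> \<le> (\<Sum>I\<in>S. measure_pmf.prob R {A. detects l I (run_alg A I)})"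
    using success by (intro sum_mono) (auto simp: S_def)
  also have "\<dots> \<le> real (2 ^ m * C)"
    using sum_prob_le_multiplicity_bound[OF _ successes_le] by (simp add: S_def)
  finally have "((real n / real d) ^ l * (2/3)) * real C \<le> 2 ^ m * real C"
    by (simp add: ac_simps)
  moreover have "0 < real C"
    using assms(1) \<open>d \<le> n\<close> by (simp add: C_def)
  ultimately have "(real n / real d) ^ l * (2/3) \<le> 2 ^ m"
    by (rule mult_right_le_imp_le)
  moreover have "(2::real) ^ Suc m = 2 * 2 ^ m" "(0::real) < 2 ^ m"
    by simp_all
  ultimately have "(real n / real d) ^ l \<le> 2 ^ Suc m"
    by linarith
  with \<open>0 < d\<close> \<open>d \<le> n\<close> show ?thesis
    using mult_log_le_of_power_le[of 2 "real n / real d" l "Suc m"] by simp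
qed simp

end
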